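(* Let $A$ be a commutative ring, $S=A[x_0,\dots,x_d]$, and identify $P_{S|A}=S\otimes_AS$ with $A[\boldsymbol{x},\boldsymbol{y}]$ where $x_i=x_i\otimes1$, $y_i=1\otimes x_i$. For each $n\geqslant0$, let $\Delta^{[n+1]}_{S|A}=((y_0-x_0)^{n+1},\dots,(y_d-x_d)^{n+1})$ and $P^{[n]}_{S|A}=P_{S|A}/\Delta^{[n+1]}_{S|A}$. Then the maps \[ H^{d+1}(\Delta^{[n+1]}_{S|A};\,P_{S|A})\xrightarrow{\ \gamma_n\ }\operatorname{Hom}_S(P^{[n]}_{S|A},S)\xrightarrow{\ \varrho^*\ } D^{[n]}_{S|A} \] are isomorphisms of $P_{S|A}$-modules.
   Context: $H^{d+1}(\Delta^{[n+1]}_{S|A};P_{S|A})$ is the top Koszul cohomology on the elements $(y_i-x_i)^{n+1}$, which equals $P^{[n]}_{S|A}$. $P_{S|A}$ is an $S$-module via $s\mapsto s\otimes1$; $P^{[n]}_{S|A}$ is a free $S$-module with basis $(y_0-x_0)^{a_0}\cdots(y_d-x_d)^{a_d}$, $0\le a_i\le n$, and $\operatorname{Hom}_S(P^{[n]}_{S|A},S)$ has the dual basis, denoted $(\cdot)^\star$. The map $\gamma_n$ is the $S$-linear map sending $(y_0-x_0)^{a_0}\cdots(y_d-x_d)^{a_d}$ to $\big((y_0-x_0)^{n-a_0}\cdots(y_d-x_d)^{n-a_d}\big)^\star$. $P_{S|A}$ acts on $\operatorname{End}_A(S)$ and on $\operatorname{Hom}_S(P^{[n]}_{S|A},S)$ via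 $(s_1\otimes s_2)\cdot\delta=\tilde s_1\circ\delta\circ\tilde s_2$ (resp. the natural action). $D^{[n]}_{S|A}$ is the set of elements of $\operatorname{End}_A(S)$ annihilated by $\Delta^{[n+1]}_{S|A}$ under this action. $\varrho:S\to P^{[n]}_{S|A}$ is $s\mapsto 1\otimes s$, and $\varrho^*(\delta)=\delta\circ\varrho$. *)

theory Defs
  imports Main "HOL-Library.Poly_Mapping"
begin

text \<open>
  A = 'a (commutative ring), variables indexed by a finite type 'v with CARD('v) = d+1.
  S = A[x_i : i in 'v] is ('v =>0 nat) =>0 'a.
  P_{S|A} = S (x)_A S is identified (as in the statement) with the polynomial ring
  A[x,y] in the variables Inl i (= x_i = x_i (x) 1) and Inr i (= y_i = 1 (x) x_i).
\<close>

type_synonym ('a,'v) S = "('v \<Rightarrow>\<^sub>0 nat) \<Rightarrow>\<^sub>0 'a"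
type_synonym ('a,'v) P = "('v + 'v \<Rightarrow>\<^sub>0 nat) \<Rightarrow>\<^sub>0 'a"

definition Cst :: "'a::comm_ring_1 \<Rightarrow> ('m \<Rightarrow>\<^sub>0 nat) \<Rightarrow>\<^sub>0 'a" where
  "Cst c = Poly_Mapping.single 0 c"

definition Var :: "'m \<Rightarrow> ('m \<Rightarrow>\<^sub>0 nat) \<Rightarrow>\<^sub>0 'a::comm_ring_1" where
  "Var i = Poly_Mapping.single (Poly_Mapping.single i 1) 1"

definition SX :: "'v \<Rightarrow> ('a::comm_ring_1,'v) S" where "SX i = Var i"
definition PX :: "'v \<Rightarrow> ('a::comm_ring_1,'v) P" where "PX i = Var (Inl i)"
definition PY :: "'v \<Rightarrow> ('a::comm_ring_1,'v) P" where "PY i = Var (Inr i)"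

definition Smono :: "('v::finite \<Rightarrow> nat) \<Rightarrow> ('a::comm_ring_1,'v) S" where
  "Smono \<alpha> = (\<Prod>i\<in>UNIV. SX i ^ \<alpha> i)"

definition iota1 :: "('a::comm_ring_1,'v::finite) S \<Rightarrow> ('a,'v) P" where
  "iota1 s = (\<Sum>m\<in>Poly_Mapping.keys s. Cst (Poly_Mapping.lookup s m) * (\<Prod>i\<in>(UNIV::'v set). PX i ^ Poly_Mapping.lookup m i))"
definition iota2 :: "('a::comm_ring_1,'v::finite) S \<Rightarrow> ('a,'v) P" where
  "iota2 s = (\<Sum>m\<in>Poly_Mapping.keys s. Cst (Poly_Mapping.lookup s m) * (\<Prod>i\<in>(UNIV::'v set). PY i ^ Poly_Mapping.lookup m i))"

definition Delta :: "nat \<Rightarrow> ('a::comm_ring_1,'v::finite) P set" where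
  "Delta n = {\<Sum>i\<in>UNIV. c i * (PY i - PX i) ^ Suc n | c. True}"

text \<open>Top Koszul cohomology H^{d+1}(f; P) of the family f (indexed by the d+1 variables)
  with coefficients in P: the cokernel of the last Koszul differential, i.e. P/(f)P,
  represented by its cosets.\<close>
definition koszul_top :: "('v::finite \<Rightarrow> ('a::comm_ring_1,'v) P) \<Rightarrow> ('a,'v) P set set" where
  "koszul_top f = range (\<lambda>p. {q. q - p \<in> {\<Sum>i\<in>UNIV. f i * m i | m. True}})"

definition cls :: "nat \<Rightarrow> ('a::comm_ring_1,'v::finite) P \<Rightarrow> ('a,'v) P set" where
  "cls n p = {q. q - p \<in> Delta n}"
definition PQ :: "nat \<Rightarrow> ('a::comm_ring_1,'v::finite) P set set" where
  "PQ n = range (cls n)"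

definition qadd :: "('a::comm_ring_1,'v) P set \<Rightarrow> ('a,'v) P set \<Rightarrow> ('a,'v) P set" where
  "qadd \<xi> \<eta> = {p + q | p q. p \<in> \<xi> \<and> q \<in> \<eta>}"
definition qact :: "nat \<Rightarrow> ('a::comm_ring_1,'v::finite) P \<Rightarrow> ('a,'v) P set \<Rightarrow> ('a,'v) P set" where
  "qact n p \<xi> = (\<Union>q\<in>\<xi>. cls n (p * q))"
definition qsmult :: "nat \<Rightarrow> ('a::comm_ring_1,'v::finite) S \<Rightarrow> ('a,'v) P set \<Rightarrow> ('a,'v) P set" where
  "qsmult n s \<xi> = qact n (iota1 s) \<xi>"

definition HomS :: "nat \<Rightarrow> (('a::comm_ring_1,'v::finite) P set \<Rightarrow> ('a,'v) S) set" where
  "HomS n = {\<phi>. (\<forall>\<xi>\<in>PQ n. \<forall>\<eta>\<in>PQ n. \<phi> (qadd \<xi> \<eta>) = \<phi> \<xi> + \<phi> \<eta>)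
              \<and> (\<forall>s. \<forall>\<xi>\<in>PQ n. \<phi> (qsmult n s \<xi>) = s * \<phi> \<xi>)
              \<and> (\<forall>\<xi>. \<xi> \<notin> PQ n \<longrightarrow> \<phi> \<xi> = 0)}"

definition Hact :: "nat \<Rightarrow> ('a::comm_ring_1,'v::finite) P \<Rightarrow> (('a,'v) P set \<Rightarrow> ('a,'v) S)
                   \<Rightarrow> (('a,'v) P set \<Rightarrow> ('a,'v) S)" where
  "Hact n p \<phi> = (\<lambda>\<xi>. if \<xi> \<in> PQ n then \<phi> (qact n p \<xi>) else 0)"

text \<open>The S-basis (y_0-x_0)^{a_0}...(y_d-x_d)^{a_d}, 0 <= a_i <= n, of P^{[n]}.\<close>
definition bas :: "nat \<Rightarrow> ('v::finite \<Rightarrow> nat) \<Rightarrow> ('a::comm_ring_1,'v) P set" where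
  "bas n a = cls n (\<Prod>i\<in>UNIV. (PY i - PX i) ^ a i)"

definition idx :: "nat \<Rightarrow> ('v::finite \<Rightarrow> nat) set" where
  "idx n = {a. \<forall>i. a i \<le> n}"

definition dual :: "nat \<Rightarrow> ('v::finite \<Rightarrow> nat) \<Rightarrow> (('a::comm_ring_1,'v) P set \<Rightarrow> ('a,'v) S)" where
  "dual n a = (THE \<phi>. \<phi> \<in> HomS n \<and> (\<forall>c\<in>idx n. \<phi> (bas n c) = (if c = a then 1 else 0)))"

definition gamma :: "nat \<Rightarrow> ('a::comm_ring_1,'v::finite) P set \<Rightarrow> (('a,'v) P set \<Rightarrow> ('a,'v) S)" where
  "gamma n = (THE g. (\<forall>\<xi>\<in>PQ n. g \<xi> \<in> HomS n)
      \<and> (\<forall>\<xi>\<in>PQ n. \<forall>\<eta>\<in>PQ n. g (qadd \<xi> \<eta>) = (\<lambda>\<zeta>. g \<xi> \<zeta> + g \<eta> \<zeta>))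
      \<and> (\<forall>s. \<forall>\<xi>\<in>PQ n. g (qsmult n s \<xi>) = (\<lambda>\<zeta>. s * g \<xi> \<zeta>))
      \<and> (\<forall>a\<in>idx n. g (bas n a) = dual n (\<lambda>i. n - a i))
      \<and> (\<forall>\<xi>. \<xi> \<notin> PQ n \<longrightarrow> g \<xi> = (\<lambda>_. 0)))"

definition EndA :: "(('a::comm_ring_1,'v) S \<Rightarrow> ('a,'v) S) set" where
  "EndA = {\<delta>. (\<forall>f g. \<delta> (f + g) = \<delta> f + \<delta> g) \<and> (\<forall>c f. \<delta> (Cst c * f) = Cst c * \<delta> f)}"

text \<open>Action of P on End_A(S): (s1 (x) s2).delta = s1 o delta o s2, extended A-linearly;
  the monomial c x^alpha y^beta corresponds to c (x^alpha (x) x^beta).\<close>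
definition Pact :: "('a::comm_ring_1,'v::finite) P \<Rightarrow> (('a,'v) S \<Rightarrow> ('a,'v) S) \<Rightarrow> (('a,'v) S \<Rightarrow> ('a,'v) S)" where
  "Pact p \<delta> = (\<lambda>f. \<Sum>m\<in>Poly_Mapping.keys p. Cst (Poly_Mapping.lookup p m) * Smono (\<lambda>i. Poly_Mapping.lookup m (Inl i))
                               * \<delta> (Smono (\<lambda>i. Poly_Mapping.lookup m (Inr i)) * f))"

definition Dn :: "nat \<Rightarrow> (('a::comm_ring_1,'v::finite) S \<Rightarrow> ('a,'v) S) set" where
  "Dn n = {\<delta>\<in>EndA. \<forall>p\<in>Delta n. Pact p \<delta> = (\<lambda>_. 0)}"

definition rho :: "nat \<Rightarrow> ('a::comm_ring_1,'v::finite) S \<Rightarrow> ('a,'v) P set" where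
  "rho n s = cls n (iota2 s)"
definition rho_star :: "nat \<Rightarrow> (('a::comm_ring_1,'v::finite) P set \<Rightarrow> ('a,'v) S) \<Rightarrow> (('a,'v) S \<Rightarrow> ('a,'v) S)" where
  "rho_star n \<phi> = \<phi> \<circ> rho n"

end

(*
  The substitution y_i |-> y_i + x_i is an automorphism of P = A[x,y] fixing the image of
  S = A[x] under s |-> s (x) 1; it sends y_i - x_i to y_i, hence carries Delta^{[n+1]} onto the
  monomial ideal (y_0^{n+1}, ..., y_d^{n+1}).  So P^{[n]} is S-free on the classes of the
  (y - x)^a with a <= (n,...,n), and the a-th coordinate of p is the coefficient of y^a in the
  substituted polynomial.

  gamma_n is the pairing of p and q given by the (n,...,n)-th coordinate of p q.  As
  (y - x)^a (y - x)^c = (y - x)^(a+c) lies in Delta^{[n+1]} unless a + c <= (n,...,n), its matrix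
  on the basis is the anti-diagonal identity: the pairing is perfect and sends (y - x)^a to the
  dual of (y - x)^(n-a).

  varrho^* is inverted by delta |-> (p |-> (p . delta)(1)): every S-linear phi on P^{[n]}
  satisfies phi(p) = (p . varrho^* phi)(1), and this formula descends to P^{[n]} exactly when
  delta is annihilated by Delta^{[n+1]}.
*)

theory Submission
  imports Defs
begin

section \<open>Substitution homomorphisms of polynomial rings\<close>

lemma poly_mapping_sum_single:
  "p = (\<Sum>m\<in>Poly_Mapping.keys p. Poly_Mapping.single m (Poly_Mapping.lookup p m))"
  by (rule poly_mapping_eqI) (simp add: lookup_sum lookup_single when_def in_keys_iff)

lemma poly_mapping_induct_single [case_names zero single add]:
  fixes p :: "'k \<Rightarrow>\<^sub>0 'b::comm_monoid_add"
  assumes "P 0" "\<And>m c. P (Poly_Mapping.single m c)" "\<And>p q. P p \<Longrightarrow> P q \<Longrightarrow> P (p + q)"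
  shows "P p"
proof -
  have "P (\<Sum>m\<in>K. Poly_Mapping.single m (Poly_Mapping.lookup p m))" if "finite K" for K
    using that by (induct K rule: finite_induct) (auto intro: assms)
  then show ?thesis
    by (subst poly_mapping_sum_single) simp
qed

definition pm_of_fun :: "('m::finite \<Rightarrow> nat) \<Rightarrow> 'm \<Rightarrow>\<^sub>0 nat" where
  "pm_of_fun e = Abs_poly_mapping e"

lemma lookup_pm_of_fun [simp]: "Poly_Mapping.lookup (pm_of_fun e) = e"
  by (simp add: pm_of_fun_def)

lemma pm_of_fun_lookup [simp]: "pm_of_fun (Poly_Mapping.lookup m) = m"
  by (rule poly_mapping_eqI) simp

lemma Cst_0 [simp]: "Cst 0 = 0"
  by (simp add: Cst_def)

lemma Cst_1 [simp]: "Cst 1 = 1"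
  by (simp add: Cst_def)

lemma Cst_add: "Cst (a + b) = Cst a + Cst b"
  by (simp add: Cst_def single_add)

lemma Cst_mult: "Cst (a * b) = Cst a * Cst b"
  by (simp add: Cst_def mult_single)

lemma single_eq_Cst_mult: "Poly_Mapping.single m c = Cst c * Poly_Mapping.single m (1::'a::comm_ring_1)"
  by (simp add: Cst_def mult_single)

lemma prod_single_one:
  "finite A \<Longrightarrow>
    (\<Prod>i\<in>A. Poly_Mapping.single (f i) (1::'a::comm_ring_1)) = Poly_Mapping.single (\<Sum>i\<in>A. f i) 1"
  by (induct A rule: finite_induct) (simp_all add: mult_single)

lemma Var_power: "Var i ^ k = Poly_Mapping.single (Poly_Mapping.single i k) (1::'a::comm_ring_1)"
  by (induct k) (simp_all add: Var_def mult_single single_add[symmetric])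

lemma prod_Var_power:
  "(\<Prod>i\<in>UNIV. Var (h i) ^ e i) =
    Poly_Mapping.single (\<Sum>i\<in>UNIV. Poly_Mapping.single (h i) (e i)) (1::'a::comm_ring_1)"
  for h :: "'m::finite \<Rightarrow> 'n"
  by (simp add: Var_power prod_single_one)

definition monom_eval :: "('m::finite \<Rightarrow> 'r::comm_monoid_mult) \<Rightarrow> ('m \<Rightarrow>\<^sub>0 nat) \<Rightarrow> 'r" where
  "monom_eval g m = (\<Prod>i\<in>UNIV. g i ^ Poly_Mapping.lookup m i)"

lemma monom_eval_add: "monom_eval g (m1 + m2) = monom_eval g m1 * monom_eval g m2"
  by (simp add: monom_eval_def lookup_add power_add prod.distrib)

lemma monom_eval_Var: "monom_eval Var m = Poly_Mapping.single m (1::'a::comm_ring_1)"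
proof -
  have "(\<Sum>i\<in>UNIV. Poly_Mapping.single i (Poly_Mapping.lookup m i)) = m"
    by (rule poly_mapping_eqI) (simp add: lookup_sum lookup_single when_def)
  then show ?thesis
    by (simp add: monom_eval_def prod_Var_power)
qed

definition subst_vars ::
    "('m::finite \<Rightarrow> ('n \<Rightarrow>\<^sub>0 nat) \<Rightarrow>\<^sub>0 'a::comm_ring_1) \<Rightarrow> (('m \<Rightarrow>\<^sub>0 nat) \<Rightarrow>\<^sub>0 'a) \<Rightarrow> ('n \<Rightarrow>\<^sub>0 nat) \<Rightarrow>\<^sub>0 'a" where
  "subst_vars g p = (\<Sum>m\<in>Poly_Mapping.keys p. Cst (Poly_Mapping.lookup p m) * monom_eval g m)"

lemma subst_vars_0 [simp]: "subst_vars g 0 = 0"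
  by (simp add: subst_vars_def)

lemma subst_vars_single: "subst_vars g (Poly_Mapping.single m c) = Cst c * monom_eval g m"
  by (simp add: subst_vars_def)

lemma subst_vars_add [simp]: "subst_vars g (p + q) = subst_vars g p + subst_vars g q"
  unfolding subst_vars_def
  by (rule setsum_keys_plus_distrib) (simp_all add: Cst_add distrib_right lookup_add)

lemma subst_vars_diff [simp]: "subst_vars g (p - q) = subst_vars g p - subst_vars g q"
  using subst_vars_add[of g "p - q" q] by (simp add: eq_diff_eq)

lemma subst_vars_sum [simp]: "subst_vars g (\<Sum>x\<in>A. f x) = (\<Sum>x\<in>A. subst_vars g (f x))"
  by (induct A rule: infinite_finite_induct) simp_all

lemma subst_vars_mult [simp]: "subst_vars g (p * q) = subst_vars g p * subst_vars g q"
proof (induct p rule: poly_mapping_induct_single)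
  case (single m c)
  show ?case
  proof (induct q rule: poly_mapping_induct_single)
    case (single m' c')
    then show ?case
      by (simp add: mult_single subst_vars_single Cst_mult monom_eval_add mult_ac)
  qed (simp_all add: distrib_left)
qed (simp_all add: distrib_right)

lemma subst_vars_Cst [simp]: "subst_vars g (Cst c) = Cst c"
  by (simp add: Cst_def subst_vars_single monom_eval_def)

lemma subst_vars_1 [simp]: "subst_vars g 1 = 1"
  using subst_vars_Cst[of g 1] by simp

lemma subst_vars_Var [simp]: "subst_vars g (Var i) = g i"
proof -
  have "monom_eval g (Poly_Mapping.single i 1) = g i"
    unfolding monom_eval_def
    by (subst prod.remove[of _ i]) (auto simp: lookup_single when_def intro!: prod.neutral)
  then show ?thesis
    by (simp add: Var_def subst_vars_single)
qed

lemma subst_vars_power [simp]: "subst_vars g (p ^ k) = subst_vars g p ^ k"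
  by (induct k) simp_all

lemma subst_vars_prod [simp]: "subst_vars g (\<Prod>x\<in>A. f x) = (\<Prod>x\<in>A. subst_vars g (f x))"
  by (induct A rule: infinite_finite_induct) simp_all

lemma subst_vars_Var_id: "subst_vars Var p = p"
  by (induct p rule: poly_mapping_induct_single)
     (simp_all add: subst_vars_single monom_eval_Var single_eq_Cst_mult[symmetric])

lemma subst_vars_unique:
  fixes h :: "(('m::finite \<Rightarrow>\<^sub>0 nat) \<Rightarrow>\<^sub>0 'a::comm_ring_1) \<Rightarrow> ('n \<Rightarrow>\<^sub>0 nat) \<Rightarrow>\<^sub>0 'a"
  assumes add: "\<And>p q. h (p + q) = h p + h q"
    and mult: "\<And>p q. h (p * q) = h p * h q"
    and Cst: "\<And>c. h (Cst c) = Cst c"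
    and Var: "\<And>i. h (Var i) = g i"
  shows "h = subst_vars g"
proof
  have h_power: "h (x ^ k) = h x ^ k" for x k
    by (induct k) (simp_all add: mult Cst[of 1, simplified])
  have h_prod: "h (\<Prod>i\<in>A. f i) = (\<Prod>i\<in>A. h (f i))" if "finite A" for A and f :: "'m \<Rightarrow> _"
    using that by (induct A rule: finite_induct) (simp_all add: mult Cst[of 1, simplified])
  fix p
  show "h p = subst_vars g p"
  proof (induct p rule: poly_mapping_induct_single)
    case zero
    show ?case
      using Cst[of 0] by simp
  next
    case (single m c)
    have "Poly_Mapping.single m c = Cst c * monom_eval Var m"
      by (simp add: monom_eval_Var single_eq_Cst_mult[symmetric])
    then show ?case
      by (simp add: mult Cst monom_eval_def h_prod h_power Var subst_vars_single)
  qed (simp add: add)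
qed

lemma subst_vars_subst_vars:
  "subst_vars g (subst_vars f p) = subst_vars (\<lambda>i. subst_vars g (f i)) p"
proof -
  have "(\<lambda>p. subst_vars g (subst_vars f p)) = subst_vars (\<lambda>i. subst_vars g (f i))"
    by (rule subst_vars_unique) simp_all
  then show ?thesis
    by (rule fun_cong)
qed

section \<open>Monomials of S and P\<close>

definition x_exps :: "('v::finite \<Rightarrow> nat) \<Rightarrow> 'v + 'v \<Rightarrow>\<^sub>0 nat" where
  "x_exps e = pm_of_fun (case_sum e (\<lambda>_. 0))"

definition y_exps :: "('v::finite \<Rightarrow> nat) \<Rightarrow> 'v + 'v \<Rightarrow>\<^sub>0 nat" where
  "y_exps e = pm_of_fun (case_sum (\<lambda>_. 0) e)"

definition x_part :: "('v::finite + 'v \<Rightarrow>\<^sub>0 nat) \<Rightarrow> 'v \<Rightarrow> nat" where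
  "x_part m = (\<lambda>i. Poly_Mapping.lookup m (Inl i))"

definition y_part :: "('v::finite + 'v \<Rightarrow>\<^sub>0 nat) \<Rightarrow> 'v \<Rightarrow> nat" where
  "y_part m = (\<lambda>i. Poly_Mapping.lookup m (Inr i))"

lemma x_part_add: "x_part (m1 + m2) = (\<lambda>i. x_part m1 i + x_part m2 i)"
  by (simp add: x_part_def lookup_add fun_eq_iff)

lemma y_part_add: "y_part (m1 + m2) = (\<lambda>i. y_part m1 i + y_part m2 i)"
  by (simp add: y_part_def lookup_add fun_eq_iff)

lemma x_part_x_exps [simp]: "x_part (x_exps e) = e"
  and y_part_x_exps [simp]: "y_part (x_exps e) = (\<lambda>_. 0)"
  and x_part_y_exps [simp]: "x_part (y_exps e) = (\<lambda>_. 0)"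
  and y_part_y_exps [simp]: "y_part (y_exps e) = e"
  by (simp_all add: x_part_def y_part_def x_exps_def y_exps_def fun_eq_iff)

lemma x_exps_plus_y_exps: "x_exps (x_part m) + y_exps (y_part m) = m"
  by (rule poly_mapping_eqI)
     (simp add: x_exps_def y_exps_def x_part_def y_part_def lookup_add split: sum.split)

lemma prod_PX_power: "(\<Prod>i\<in>UNIV. PX i ^ e i) = (Poly_Mapping.single (x_exps e) 1 :: ('a::comm_ring_1,'v::finite) P)"
proof -
  have "(\<Sum>i\<in>UNIV. Poly_Mapping.single (Inl i) (e i)) = x_exps e"
    by (rule poly_mapping_eqI) (simp add: x_exps_def lookup_sum lookup_single when_def split: sum.split)
  then show ?thesis
    by (simp add: PX_def prod_Var_power)
qed

lemma prod_PY_power: "(\<Prod>i\<in>UNIV. PY i ^ e i) = (Poly_Mapping.single (y_exps e) 1 :: ('a::comm_ring_1,'v::finite) P)"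
proof -
  have "(\<Sum>i\<in>UNIV. Poly_Mapping.single (Inr i) (e i)) = y_exps e"
    by (rule poly_mapping_eqI) (simp add: y_exps_def lookup_sum lookup_single when_def split: sum.split)
  then show ?thesis
    by (simp add: PY_def prod_Var_power)
qed

lemma Smono_eq_single: "Smono e = (Poly_Mapping.single (pm_of_fun e) 1 :: ('a::comm_ring_1,'v::finite) S)"
proof -
  have "(\<Sum>i\<in>UNIV. Poly_Mapping.single i (e i)) = pm_of_fun e"
    by (rule poly_mapping_eqI) (simp add: lookup_sum lookup_single when_def)
  then show ?thesis
    by (simp add: Smono_def SX_def prod_Var_power)
qed

lemma Smono_add: "Smono (\<lambda>i. e1 i + e2 i) = (Smono e1 * Smono e2 :: ('a::comm_ring_1,'v::finite) S)"
  by (simp add: Smono_def power_add prod.distrib)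

lemma Smono_zero [simp]: "Smono (\<lambda>_. 0) = 1"
  by (simp add: Smono_def)

lemma iota1_eq_subst_vars: "iota1 = subst_vars PX"
  by (simp add: fun_eq_iff iota1_def subst_vars_def monom_eval_def)

lemma iota2_eq_subst_vars: "iota2 = subst_vars PY"
  by (simp add: fun_eq_iff iota2_def subst_vars_def monom_eval_def)

lemma iota1_0 [simp]: "iota1 0 = 0"
  and iota1_add [simp]: "iota1 (s + t) = iota1 s + iota1 t"
  and iota1_Cst [simp]: "iota1 (Cst c) = Cst c"
  and iota2_0 [simp]: "iota2 0 = 0"
  and iota2_add [simp]: "iota2 (s + t) = iota2 s + iota2 t"
  and iota2_mult: "iota2 (s * t) = iota2 s * iota2 t"
  and iota2_Cst [simp]: "iota2 (Cst c) = Cst c"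
  by (simp_all add: iota1_eq_subst_vars iota2_eq_subst_vars)

lemma iota1_single: "iota1 (Poly_Mapping.single \<alpha> c) = Poly_Mapping.single (x_exps (Poly_Mapping.lookup \<alpha>)) c"
  by (simp add: iota1_eq_subst_vars subst_vars_single monom_eval_def prod_PX_power single_eq_Cst_mult[symmetric])

lemma iota2_single: "iota2 (Poly_Mapping.single \<beta> c) = Poly_Mapping.single (y_exps (Poly_Mapping.lookup \<beta>)) c"
  by (simp add: iota2_eq_subst_vars subst_vars_single monom_eval_def prod_PY_power single_eq_Cst_mult[symmetric])

lemma single_eq_iota1_mult_iota2:
  "Poly_Mapping.single m c =
    iota1 (Poly_Mapping.single (pm_of_fun (x_part m)) c) * iota2 (Poly_Mapping.single (pm_of_fun (y_part m)) 1)"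
  by (simp add: iota1_single iota2_single mult_single x_exps_plus_y_exps)

section \<open>The S-basis of P^{[n]}\<close>

lemma finite_idx: "finite (idx n :: ('v::finite \<Rightarrow> nat) set)"
proof -
  have "idx n = {f. (\<forall>x. x \<in> (UNIV::'v set) \<longrightarrow> f x \<in> {..n}) \<and> (\<forall>x. x \<notin> UNIV \<longrightarrow> f x = 0)}"
    by (auto simp: idx_def)
  then show ?thesis
    using finite_set_of_finite_funs[of "UNIV::'v set" "{..n}" 0] by simp
qed

definition ydiff_pow :: "('v::finite \<Rightarrow> nat) \<Rightarrow> ('a::comm_ring_1,'v) P" where
  "ydiff_pow a = (\<Prod>i\<in>UNIV. (PY i - PX i) ^ a i)"

lemma bas_eq_cls_ydiff_pow: "bas n a = cls n (ydiff_pow a)"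
  by (simp add: bas_def ydiff_pow_def)

lemma ydiff_pow_mult: "ydiff_pow a * ydiff_pow b = ydiff_pow (\<lambda>i. a i + b i)"
  by (simp add: ydiff_pow_def power_add prod.distrib)

abbreviation shift :: "('a::comm_ring_1,'v::finite) P \<Rightarrow> ('a,'v) P" where
  "shift \<equiv> subst_vars (case_sum PX (\<lambda>i. PY i + PX i))"

abbreviation unshift :: "('a::comm_ring_1,'v::finite) P \<Rightarrow> ('a,'v) P" where
  "unshift \<equiv> subst_vars (case_sum PX (\<lambda>i. PY i - PX i))"

lemma shift_PX [simp]: "shift (PX i) = PX i"
  and shift_PY [simp]: "shift (PY i) = PY i + PX i"
  and unshift_PX [simp]: "unshift (PX i) = PX i"
  and unshift_PY [simp]: "unshift (PY i) = PY i - PX i"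
  by (simp_all add: PX_def PY_def)

lemma unshift_shift [simp]: "unshift (shift p) = p"
proof -
  have shift_then_unshift: "(\<lambda>j. unshift (case_sum PX (\<lambda>i. PY i + PX i) j)) = Var"
    by (auto simp: fun_eq_iff PX_def PY_def split: sum.split)
  have "unshift (shift p) = subst_vars (\<lambda>j. unshift (case_sum PX (\<lambda>i. PY i + PX i) j)) p"
    by (rule subst_vars_subst_vars)
  also have "\<dots> = p"
    by (simp only: shift_then_unshift subst_vars_Var_id)
  finally show ?thesis .
qed

lemma shift_iota1 [simp]: "shift (iota1 s) = iota1 s"
  and unshift_iota1 [simp]: "unshift (iota1 s) = iota1 s"
  by (simp_all add: iota1_eq_subst_vars subst_vars_subst_vars)

lemma shift_ydiff_pow: "shift (ydiff_pow a) = (\<Prod>i\<in>UNIV. PY i ^ a i)"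
  by (simp add: ydiff_pow_def)

lemma unshift_single:
  fixes m :: "'v::finite + 'v \<Rightarrow>\<^sub>0 nat" and c :: "'a::comm_ring_1"
  shows "unshift (Poly_Mapping.single m c) = iota1 (Poly_Mapping.single (pm_of_fun (x_part m)) c) * ydiff_pow (y_part m)"
proof -
  have "iota2 (Poly_Mapping.single (pm_of_fun (y_part m)) 1) = (\<Prod>i\<in>UNIV. PY i ^ y_part m i :: ('a,'v) P)"
    by (simp add: iota2_single prod_PY_power)
  then show ?thesis
    by (subst single_eq_iota1_mult_iota2) (simp add: ydiff_pow_def)
qed

definition coeff_y :: "('v::finite \<Rightarrow> nat) \<Rightarrow> ('a::comm_ring_1,'v) P \<Rightarrow> ('a,'v) S" where
  "coeff_y a q = (\<Sum>m\<in>Poly_Mapping.keys q.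
      if y_part m = a then Poly_Mapping.single (pm_of_fun (x_part m)) (Poly_Mapping.lookup q m) else 0)"

lemma coeff_y_0 [simp]: "coeff_y a 0 = 0"
  by (simp add: coeff_y_def)

lemma coeff_y_single:
  "coeff_y a (Poly_Mapping.single m c) = (if y_part m = a then Poly_Mapping.single (pm_of_fun (x_part m)) c else 0)"
  by (simp add: coeff_y_def)

lemma coeff_y_add [simp]: "coeff_y a (p + q) = coeff_y a p + coeff_y a q"
  unfolding coeff_y_def
  by (rule setsum_keys_plus_distrib) (simp_all add: single_add lookup_add)

lemma coeff_y_diff [simp]: "coeff_y a (p - q) = coeff_y a p - coeff_y a q"
  using coeff_y_add[of a "p - q" q] by (simp add: eq_diff_eq)

lemma coeff_y_sum [simp]: "coeff_y a (\<Sum>x\<in>A. f x) = (\<Sum>x\<in>A. coeff_y a (f x))"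
  by (induct A rule: infinite_finite_induct) simp_all

lemma coeff_y_iota1_mult: "coeff_y a (iota1 s * q) = s * coeff_y a q"
proof (induct s rule: poly_mapping_induct_single)
  case (single \<alpha> c)
  have "pm_of_fun (\<lambda>i. Poly_Mapping.lookup \<alpha> i + x_part m i) = \<alpha> + pm_of_fun (x_part m)" for m
    by (rule poly_mapping_eqI) (simp add: lookup_add)
  then show ?case
    by (induct q rule: poly_mapping_induct_single)
       (simp_all add: iota1_single mult_single coeff_y_single x_part_add y_part_add distrib_left)
qed (simp_all add: distrib_right)

lemma coeff_y_mult_PY_power:
  assumes "a i \<le> n"
  shows "coeff_y a (q * PY i ^ Suc n) = 0"
proof (induct q rule: poly_mapping_induct_single)
  case (single m c)
  have "y_part (m + Poly_Mapping.single (Inr i) (Suc n)) i \<noteq> a i"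
    using assms by (simp add: y_part_def lookup_add)
  then show ?case
    by (auto simp: PY_def Var_power mult_single coeff_y_single simp del: power_Suc)
qed (simp_all add: distrib_right)

lemma coeff_y_prod_PY_power:
  "coeff_y a (\<Prod>i\<in>UNIV. PY i ^ b i) = (if b = a then 1 else (0::('a::comm_ring_1,'v::finite) S))"
  by (simp add: prod_PY_power coeff_y_single pm_of_fun_def)

definition coord :: "('v::finite \<Rightarrow> nat) \<Rightarrow> ('a::comm_ring_1,'v) P \<Rightarrow> ('a,'v) S" where
  "coord a p = coeff_y a (shift p)"

lemma coord_add: "coord a (p + q) = coord a p + coord a q"
  and coord_diff: "coord a (p - q) = coord a p - coord a q"
  and coord_sum: "coord a (\<Sum>x\<in>A. f x) = (\<Sum>x\<in>A. coord a (f x))"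
  and coord_iota1_mult: "coord a (iota1 s * p) = s * coord a p"
  and coord_ydiff_pow: "coord a (ydiff_pow b) = (if b = a then 1 else 0)"
  by (simp_all add: coord_def coeff_y_iota1_mult shift_ydiff_pow coeff_y_prod_PY_power)

lemma sum_mult_generators_in_Delta: "(\<Sum>i\<in>UNIV. c i * (PY i - PX i) ^ Suc n) \<in> Delta n"
  unfolding Delta_def by blast

lemma DeltaE:
  assumes "p \<in> Delta n"
  obtains c where "p = (\<Sum>i\<in>UNIV. c i * (PY i - PX i) ^ Suc n)"
  using assms by (auto simp: Delta_def)

lemma Delta_zero: "0 \<in> Delta n"
  using sum_mult_generators_in_Delta[of "\<lambda>_. 0"] by simp

lemma Delta_add:
  assumes "p \<in> Delta n" "q \<in> Delta n"
  shows "p + q \<in> Delta n"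
proof -
  obtain c where "p = (\<Sum>i\<in>UNIV. c i * (PY i - PX i) ^ Suc n)"
    using assms(1) by (rule DeltaE)
  moreover obtain c' where "q = (\<Sum>i\<in>UNIV. c' i * (PY i - PX i) ^ Suc n)"
    using assms(2) by (rule DeltaE)
  ultimately
  have "p + q = (\<Sum>i\<in>UNIV. (c i + c' i) * (PY i - PX i) ^ Suc n)"
    by (simp add: distrib_right sum.distrib)
  then show ?thesis
    by (simp only: sum_mult_generators_in_Delta)
qed

lemma Delta_mult:
  assumes "p \<in> Delta n"
  shows "r * p \<in> Delta n"
proof -
  obtain c where "p = (\<Sum>i\<in>UNIV. c i * (PY i - PX i) ^ Suc n)"
    using assms by (rule DeltaE)
  then have "r * p = (\<Sum>i\<in>UNIV. (r * c i) * (PY i - PX i) ^ Suc n)"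
    by (simp add: sum_distrib_left mult.assoc)
  then show ?thesis
    by (simp only: sum_mult_generators_in_Delta)
qed

lemma Delta_diff:
  assumes "p \<in> Delta n" "q \<in> Delta n"
  shows "p - q \<in> Delta n"
proof -
  have "p - q = p + (- 1) * q"
    by simp
  then show ?thesis
    using assms by (simp only: Delta_add Delta_mult)
qed

lemma generator_in_Delta: "(PY i - PX i) ^ Suc n \<in> Delta n"
proof -
  have "(PY i - PX i) ^ Suc n = (\<Sum>j\<in>UNIV. (if j = i then 1 else 0) * (PY j - PX j) ^ Suc n)"
    by (simp add: if_distrib[of "\<lambda>x. x * _"] cong: if_cong del: power_Suc)
  also have "\<dots> \<in> Delta n"
    by (rule sum_mult_generators_in_Delta)
  finally show ?thesis .
qed

lemma ydiff_pow_in_Delta: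
  assumes "b \<notin> idx n"
  shows "ydiff_pow b \<in> Delta n"
proof -
  obtain i where "n < b i"
    using assms by (auto simp: idx_def not_le)
  have "ydiff_pow b = (PY i - PX i) ^ b i * (\<Prod>j\<in>UNIV - {i}. (PY j - PX j) ^ b j)"
    unfolding ydiff_pow_def by (rule prod.remove) simp_all
  also have "(PY i - PX i) ^ b i = (PY i - PX i) ^ (b i - Suc n) * (PY i - PX i) ^ Suc n"
    using \<open>n < b i\<close> by (simp only: power_add[symmetric] le_add_diff_inverse2 Suc_leI)
  also have "\<dots> * (\<Prod>j\<in>UNIV - {i}. (PY j - PX j) ^ b j) =
      ((PY i - PX i) ^ (b i - Suc n) * (\<Prod>j\<in>UNIV - {i}. (PY j - PX j) ^ b j)) * (PY i - PX i) ^ Suc n"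
    by (simp only: mult_ac)
  also have "\<dots> \<in> Delta n"
    by (rule Delta_mult[OF generator_in_Delta])
  finally show ?thesis .
qed

lemma coord_Delta_eq_0:
  assumes "a \<in> idx n" "p \<in> Delta n"
  shows "coord a p = 0"
proof -
  obtain c where "p = (\<Sum>i\<in>UNIV. c i * (PY i - PX i) ^ Suc n)"
    using assms(2) by (rule DeltaE)
  then have "coord a p = (\<Sum>i\<in>UNIV. coeff_y a (shift (c i) * PY i ^ Suc n))"
    by (simp add: coord_def)
  also have "\<dots> = 0"
    using assms(1) by (intro sum.neutral ballI coeff_y_mult_PY_power) (simp add: idx_def)
  finally show ?thesis .
qed

lemma unshift_minus_coeff_y_expansion_in_Delta:
  "unshift q - (\<Sum>a\<in>idx n. iota1 (coeff_y a q) * ydiff_pow a) \<in> Delta n"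
proof (induct q rule: poly_mapping_induct_single)
  case zero
  then show ?case
    by (simp add: Delta_zero)
next
  case (single m c)
  let ?r = "iota1 (Poly_Mapping.single (pm_of_fun (x_part m)) c) * ydiff_pow (y_part m)"
  have "(\<Sum>a\<in>idx n. iota1 (coeff_y a (Poly_Mapping.single m c)) * ydiff_pow a) =
      (\<Sum>a\<in>idx n. if y_part m = a then ?r else 0)"
    by (rule sum.cong) (auto simp: coeff_y_single)
  also have "\<dots> = (if y_part m \<in> idx n then ?r else 0)"
    by (simp add: finite_idx)
  finally show ?case
    using ydiff_pow_in_Delta[of "y_part m" n] Delta_mult
    by (auto simp: unshift_single Delta_zero)
next
  case (add p q)
  have "unshift (p + q) - (\<Sum>a\<in>idx n. iota1 (coeff_y a (p + q)) * ydiff_pow a) =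
      (unshift p - (\<Sum>a\<in>idx n. iota1 (coeff_y a p) * ydiff_pow a)) +
      (unshift q - (\<Sum>a\<in>idx n. iota1 (coeff_y a q) * ydiff_pow a))"
    by (simp add: distrib_right sum.distrib)
  then show ?case
    using Delta_add[OF add] by (simp only:)
qed

lemma minus_coord_expansion_in_Delta: "p - (\<Sum>a\<in>idx n. iota1 (coord a p) * ydiff_pow a) \<in> Delta n"
  using unshift_minus_coeff_y_expansion_in_Delta[of "shift p" n] by (simp only: coord_def unshift_shift)

lemma coord_sum_iota1_mult_ydiff_pow:
  assumes "a \<in> idx n"
  shows "coord a (\<Sum>b\<in>idx n. iota1 (s b) * ydiff_pow b) = s a"
  using assms by (simp add: coord_sum coord_iota1_mult coord_ydiff_pow finite_idx if_distrib[of "(*) _"] cong: if_cong)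

section \<open>S-linear functionals on P^{[n]}\<close>

lemma mem_cls_iff: "q \<in> cls n p \<longleftrightarrow> q - p \<in> Delta n"
  by (simp add: cls_def)

lemma cls_eq_iff: "cls n p = cls n q \<longleftrightarrow> p - q \<in> Delta n"
proof
  assume "cls n p = cls n q"
  moreover have "p \<in> cls n p"
    by (simp add: cls_def Delta_zero)
  ultimately show "p - q \<in> Delta n"
    by (simp add: cls_def)
next
  assume pq: "p - q \<in> Delta n"
  have "x - p \<in> Delta n \<longleftrightarrow> x - q \<in> Delta n" for x
    using Delta_add[OF _ pq, of "x - p"] Delta_diff[OF _ pq, of "x - q"] by auto
  then show "cls n p = cls n q"
    by (simp add: cls_def)
qed

lemma cls_in_PQ [simp]: "cls n p \<in> PQ n"
  by (simp add: PQ_def)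

lemma PQE:
  assumes "\<xi> \<in> PQ n"
  obtains p where "\<xi> = cls n p"
  using assms by (auto simp: PQ_def)

lemma qadd_cls: "qadd (cls n p) (cls n q) = cls n (p + q)"
proof (rule set_eqI)
  fix x
  have "x \<in> qadd (cls n p) (cls n q) \<longleftrightarrow> (\<exists>a b. x = a + b \<and> a - p \<in> Delta n \<and> b - q \<in> Delta n)"
    by (auto simp: qadd_def cls_def)
  also have "\<dots> \<longleftrightarrow> x - (p + q) \<in> Delta n"
  proof
    assume "\<exists>a b. x = a + b \<and> a - p \<in> Delta n \<and> b - q \<in> Delta n"
    then obtain a b where "x = a + b" "a - p \<in> Delta n" "b - q \<in> Delta n"
      by blast
    then show "x - (p + q) \<in> Delta n"
      using Delta_add[of "a - p" n "b - q"] by (simp add: algebra_simps)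
  next
    assume "x - (p + q) \<in> Delta n"
    then show "\<exists>a b. x = a + b \<and> a - p \<in> Delta n \<and> b - q \<in> Delta n"
      by (intro exI[of _ "x - q"] exI[of _ q]) (simp add: Delta_zero algebra_simps)
  qed
  finally show "x \<in> qadd (cls n p) (cls n q) \<longleftrightarrow> x \<in> cls n (p + q)"
    by (simp add: cls_def)
qed

lemma qact_cls: "qact n r (cls n p) = cls n (r * p)"
proof -
  have "cls n (r * q) = cls n (r * p)" if "q \<in> cls n p" for q
    using that Delta_mult[of "q - p" n r] by (simp add: mem_cls_iff cls_eq_iff right_diff_distrib)
  moreover have "p \<in> cls n p"
    by (simp add: cls_def Delta_zero)
  ultimately show ?thesis
    unfolding qact_def by blast
qed

lemma qsmult_cls: "qsmult n s (cls n p) = cls n (iota1 s * p)"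
  by (simp add: qsmult_def qact_cls)

lemma cls_eq_cls_expansion: "cls n p = cls n (\<Sum>a\<in>idx n. iota1 (coord a p) * ydiff_pow a)"
  by (simp add: cls_eq_iff minus_coord_expansion_in_Delta)

definition slinear :: "nat \<Rightarrow> (('a::comm_ring_1,'v::finite) P set \<Rightarrow> ('a,'v) S) \<Rightarrow> bool" where
  "slinear n F \<longleftrightarrow>
    (\<forall>\<xi>\<in>PQ n. \<forall>\<eta>\<in>PQ n. F (qadd \<xi> \<eta>) = F \<xi> + F \<eta>) \<and> (\<forall>s. \<forall>\<xi>\<in>PQ n. F (qsmult n s \<xi>) = s * F \<xi>)"

lemma slinear_iff_cls:
  "slinear n F \<longleftrightarrow>
    (\<forall>p q. F (cls n (p + q)) = F (cls n p) + F (cls n q)) \<and> (\<forall>s p. F (cls n (iota1 s * p)) = s * F (cls n p))"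
  by (auto simp: slinear_def PQ_def qadd_cls qsmult_cls)

lemma HomS_iff: "\<phi> \<in> HomS n \<longleftrightarrow> slinear n \<phi> \<and> (\<forall>\<xi>. \<xi> \<notin> PQ n \<longrightarrow> \<phi> \<xi> = 0)"
  by (simp add: HomS_def slinear_def)

lemma slinear_cls_add: "slinear n F \<Longrightarrow> F (cls n (p + q)) = F (cls n p) + F (cls n q)"
  and slinear_cls_iota1_mult: "slinear n F \<Longrightarrow> F (cls n (iota1 s * p)) = s * F (cls n p)"
  by (simp_all add: slinear_iff_cls)

lemma slinear_cls_0: "slinear n F \<Longrightarrow> F (cls n 0) = 0"
  using slinear_cls_add[of n F 0 0] by simp

lemma slinear_cls_sum: "slinear n F \<Longrightarrow> F (cls n (\<Sum>x\<in>A. f x)) = (\<Sum>x\<in>A. F (cls n (f x)))"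
  by (induct A rule: infinite_finite_induct) (simp_all add: slinear_cls_0 slinear_cls_add)

lemma slinear_cls_expansion: "slinear n F \<Longrightarrow> F (cls n p) = (\<Sum>a\<in>idx n. coord a p * F (bas n a))"
  by (subst cls_eq_cls_expansion) (simp add: slinear_cls_sum slinear_cls_iota1_mult bas_eq_cls_ydiff_pow)

lemma slinear_eq_on_PQ:
  assumes "slinear n F" "slinear n G" "\<And>a. a \<in> idx n \<Longrightarrow> F (bas n a) = G (bas n a)" "\<xi> \<in> PQ n"
  shows "F \<xi> = G \<xi>"
  using assms(4) by (rule PQE) (simp add: assms(1-3) slinear_cls_expansion)

lemma HomS_eqI:
  assumes "\<phi> \<in> HomS n" "\<psi> \<in> HomS n" "\<And>a. a \<in> idx n \<Longrightarrow> \<phi> (bas n a) = \<psi> (bas n a)"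
  shows "\<phi> = \<psi>"
proof
  fix \<xi>
  show "\<phi> \<xi> = \<psi> \<xi>"
    using assms slinear_eq_on_PQ[of n \<phi> \<psi> \<xi>] by (cases "\<xi> \<in> PQ n") (auto simp: HomS_iff)
qed

definition rep :: "nat \<Rightarrow> ('a::comm_ring_1,'v::finite) P set \<Rightarrow> ('a,'v) P" where
  "rep n \<xi> = (SOME p. \<xi> = cls n p)"

lemma rep_cls_diff: "rep n (cls n p) - p \<in> Delta n"
proof -
  have "cls n p = cls n (rep n (cls n p))"
    unfolding rep_def by (rule someI) (rule refl)
  then show ?thesis
    by (metis cls_eq_iff)
qed

definition respects_Delta :: "nat \<Rightarrow> (('a::comm_ring_1,'v::finite) P \<Rightarrow> 'b) \<Rightarrow> bool" where
  "respects_Delta n f \<longleftrightarrow> (\<forall>p q. p - q \<in> Delta n \<longrightarrow> f p = f q)"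

definition descend :: "nat \<Rightarrow> (('a::comm_ring_1,'v::finite) P \<Rightarrow> ('a,'v) S) \<Rightarrow> ('a,'v) P set \<Rightarrow> ('a,'v) S" where
  "descend n f \<xi> = (if \<xi> \<in> PQ n then f (rep n \<xi>) else 0)"

lemma descend_cls: "respects_Delta n f \<Longrightarrow> descend n f (cls n p) = f p"
  using rep_cls_diff[of n p] by (simp add: descend_def respects_Delta_def)

lemma descend_in_HomS:
  assumes "respects_Delta n f" "\<And>p q. f (p + q) = f p + f q" "\<And>s p. f (iota1 s * p) = s * f p"
  shows "descend n f \<in> HomS n"
  using assms by (simp add: HomS_iff slinear_iff_cls descend_cls) (simp add: descend_def)

lemma respects_Delta_coord:
  assumes "a \<in> idx n"
  shows "respects_Delta n (coord a :: ('a::comm_ring_1,'v::finite) P \<Rightarrow> _)"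
  unfolding respects_Delta_def
proof (intro allI impI)
  fix p q :: "('a,'v) P"
  assume "p - q \<in> Delta n"
  then have "coord a p - coord a q = 0"
    using coord_Delta_eq_0[OF assms] by (simp flip: coord_diff)
  then show "coord a p = coord a q"
    by simp
qed

lemma descend_coord_in_HomS: "b \<in> idx n \<Longrightarrow> descend n (coord b) \<in> HomS n"
  by (rule descend_in_HomS) (simp_all add: respects_Delta_coord coord_add coord_iota1_mult)

lemma descend_coord_bas: "b \<in> idx n \<Longrightarrow> descend n (coord b) (bas n c) = (if c = b then 1 else 0)"
  by (simp add: bas_eq_cls_ydiff_pow descend_cls respects_Delta_coord coord_ydiff_pow)

lemma dual_eq_descend_coord:
  assumes "b \<in> idx n"
  shows "dual n b = descend n (coord b)"
  unfolding dual_def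
proof (rule the_equality)
  show "descend n (coord b) \<in> HomS n \<and> (\<forall>c\<in>idx n. descend n (coord b) (bas n c) = (if c = b then 1 else 0))"
    using assms by (simp add: descend_coord_in_HomS descend_coord_bas)
  show "\<phi> = descend n (coord b)"
    if "\<phi> \<in> HomS n \<and> (\<forall>c\<in>idx n. \<phi> (bas n c) = (if c = b then 1 else 0))" for \<phi>
    using that assms by (intro HomS_eqI) (auto simp: descend_coord_in_HomS descend_coord_bas)
qed

section \<open>The isomorphism varrho^*\<close>

lemma Pact_0 [simp]: "Pact 0 \<delta> f = 0"
  by (simp add: Pact_def)

lemma Pact_add: "Pact (p + q) \<delta> f = Pact p \<delta> f + Pact q \<delta> f"
  unfolding Pact_def
  by (rule setsum_keys_plus_distrib) (simp_all add: Cst_add distrib_right lookup_add)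

lemma Pact_diff: "Pact (p - q) \<delta> f = Pact p \<delta> f - Pact q \<delta> f"
  using Pact_add[of "p - q" q \<delta> f] by (simp add: eq_diff_eq)

lemma Pact_single: "Pact (Poly_Mapping.single m c) \<delta> f = Cst c * Smono (x_part m) * \<delta> (Smono (y_part m) * f)"
  by (simp add: Pact_def x_part_def y_part_def)

lemma EndA_zero:
  assumes "\<delta> \<in> EndA"
  shows "\<delta> 0 = 0"
proof -
  have "\<delta> (0 + 0) = \<delta> 0 + \<delta> 0"
    using assms unfolding EndA_def by blast
  then show ?thesis
    by simp
qed

lemma Pact_iota2:
  assumes "\<delta> \<in> EndA"
  shows "Pact (iota2 t) \<delta> f = \<delta> (t * f)"
proof (induct t rule: poly_mapping_induct_single)
  case zero
  then show ?case
    using assms by (simp add: EndA_zero)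
next
  case (single \<beta> c)
  have "\<delta> (Poly_Mapping.single \<beta> c * f) = Cst c * \<delta> (Poly_Mapping.single \<beta> 1 * f)"
    using assms by (subst single_eq_Cst_mult) (simp add: EndA_def mult.assoc)
  then show ?case
    by (simp add: iota2_single Pact_single Smono_eq_single)
next
  case (add p q)
  then show ?case
    using assms by (simp add: Pact_add distrib_right EndA_def)
qed

lemma Pact_iota1_mult: "Pact (iota1 s * p) \<delta> f = s * Pact p \<delta> f"
proof (induct s rule: poly_mapping_induct_single)
  case (single \<alpha> c)
  show ?case
  proof (induct p rule: poly_mapping_induct_single)
    case (single m d)
    have x_part_eq: "Smono (x_part (x_exps (Poly_Mapping.lookup \<alpha>) + m)) = Poly_Mapping.single \<alpha> 1 * Smono (x_part m)"
      by (simp add: x_part_add Smono_add Smono_eq_single)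
    have y_part_eq: "y_part (x_exps (Poly_Mapping.lookup \<alpha>) + m) = y_part m"
      by (simp add: y_part_add)
    have "Pact (iota1 (Poly_Mapping.single \<alpha> c) * Poly_Mapping.single m d) \<delta> f =
        Pact (Poly_Mapping.single (x_exps (Poly_Mapping.lookup \<alpha>) + m) (c * d)) \<delta> f"
      by (simp add: iota1_single mult_single)
    also have "\<dots> = Cst (c * d) * (Poly_Mapping.single \<alpha> 1 * Smono (x_part m)) * \<delta> (Smono (y_part m) * f)"
      by (simp only: Pact_single x_part_eq y_part_eq)
    also have "\<dots> = Poly_Mapping.single \<alpha> c * Pact (Poly_Mapping.single m d) \<delta> f"
      by (simp add: Pact_single Cst_mult single_eq_Cst_mult[of \<alpha> c] mult_ac)
    finally show ?case .
  qed (simp_all add: distrib_left Pact_add)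
qed (simp_all add: distrib_right Pact_add)

lemma rho_star_apply: "rho_star n \<phi> f = \<phi> (cls n (iota2 f))"
  by (simp add: rho_star_def rho_def)

lemma rho_star_add: "rho_star n (\<lambda>\<zeta>. \<phi> \<zeta> + \<psi> \<zeta>) = (\<lambda>f. rho_star n \<phi> f + rho_star n \<psi> f)"
  by (simp add: rho_star_def comp_def)

lemma Hact_cls: "Hact n p \<phi> (cls n q) = \<phi> (cls n (p * q))"
  by (simp add: Hact_def qact_cls)

lemma rho_star_in_EndA:
  assumes "\<phi> \<in> HomS n"
  shows "rho_star n \<phi> \<in> EndA"
proof -
  have "slinear n \<phi>"
    using assms by (simp add: HomS_iff)
  moreover have "\<phi> (cls n (iota2 (Cst c * f))) = Cst c * \<phi> (cls n (iota2 f))" for c f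
    using slinear_cls_iota1_mult[OF \<open>slinear n \<phi>\<close>, of "Cst c" "iota2 f"] by (simp add: iota2_mult)
  ultimately show ?thesis
    by (simp add: EndA_def rho_star_apply slinear_cls_add slinear_cls_iota1_mult)
qed

lemma HomS_cls_mult_iota2:
  assumes "\<phi> \<in> HomS n"
  shows "\<phi> (cls n (p * iota2 f)) = Pact p (rho_star n \<phi>) f"
proof -
  have lin: "slinear n \<phi>"
    using assms by (simp add: HomS_iff)
  show ?thesis
  proof (induct p arbitrary: f rule: poly_mapping_induct_single)
    case zero
    then show ?case
      using lin by (simp add: slinear_cls_0)
  next
    case (single m c)
    have "Poly_Mapping.single m c * iota2 f =
        iota1 (Poly_Mapping.single (pm_of_fun (x_part m)) c) * iota2 (Poly_Mapping.single (pm_of_fun (y_part m)) 1 * f)"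
      by (subst single_eq_iota1_mult_iota2) (simp add: iota2_mult mult.assoc)
    then show ?case
      using lin by (simp add: slinear_cls_iota1_mult Pact_single rho_star_apply Smono_eq_single
          single_eq_Cst_mult[of "pm_of_fun (x_part m)" c])
  next
    case (add p q)
    then show ?case
      using lin by (simp add: distrib_right slinear_cls_add Pact_add)
  qed
qed

lemma HomS_cls_eq_Pact: "\<phi> \<in> HomS n \<Longrightarrow> \<phi> (cls n p) = Pact p (rho_star n \<phi>) 1"
  using HomS_cls_mult_iota2[of \<phi> n p 1] by (simp add: iota2_eq_subst_vars)

lemma rho_star_Hact: "\<phi> \<in> HomS n \<Longrightarrow> rho_star n (Hact n p \<phi>) = Pact p (rho_star n \<phi>)"
  by (rule ext) (simp add: rho_star_apply Hact_cls HomS_cls_mult_iota2)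

lemma rho_star_in_Dn:
  assumes "\<phi> \<in> HomS n"
  shows "rho_star n \<phi> \<in> Dn n"
proof -
  have "Pact p (rho_star n \<phi>) f = 0" if "p \<in> Delta n" for p f
  proof -
    have "cls n (p * iota2 f) = cls n 0"
      using that Delta_mult[of p n "iota2 f"] by (simp add: cls_eq_iff mult.commute)
    then show ?thesis
      using assms HomS_cls_mult_iota2[OF assms, of p f] by (simp add: HomS_iff slinear_cls_0)
  qed
  then show ?thesis
    using rho_star_in_EndA[OF assms] by (auto simp: Dn_def)
qed

lemma inj_on_rho_star: "inj_on (rho_star n) (HomS n)"
proof (rule inj_onI)
  fix \<phi> \<psi>
  assume hom: "\<phi> \<in> HomS n" "\<psi> \<in> HomS n" and eq: "rho_star n \<phi> = rho_star n \<psi>"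
  show "\<phi> = \<psi>"
  proof
    fix \<xi>
    show "\<phi> \<xi> = \<psi> \<xi>"
      using hom eq by (cases "\<xi> \<in> PQ n") (auto elim: PQE simp: HomS_cls_eq_Pact HomS_iff)
  qed
qed

lemma rho_star_descend_Pact:
  fixes \<delta> :: "('a::comm_ring_1,'v::finite) S \<Rightarrow> ('a,'v) S"
  assumes "\<delta> \<in> Dn n"
  shows "descend n (\<lambda>p. Pact p \<delta> 1) \<in> HomS n"
    and "rho_star n (descend n (\<lambda>p. Pact p \<delta> 1)) = \<delta>"
proof -
  have End: "\<delta> \<in> EndA" and annihilated: "\<And>p. p \<in> Delta n \<Longrightarrow> Pact p \<delta> = (\<lambda>_. 0)"
    using assms by (auto simp: Dn_def)
  have respects: "respects_Delta n (\<lambda>p. Pact p \<delta> 1)"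
    unfolding respects_Delta_def
  proof (intro allI impI)
    fix p q :: "('a,'v) P"
    assume "p - q \<in> Delta n"
    then have "Pact p \<delta> 1 - Pact q \<delta> 1 = 0"
      by (simp add: annihilated flip: Pact_diff)
    then show "Pact p \<delta> 1 = Pact q \<delta> 1"
      by simp
  qed
  show "descend n (\<lambda>p. Pact p \<delta> 1) \<in> HomS n"
    by (intro descend_in_HomS respects) (simp_all add: Pact_add Pact_iota1_mult)
  show "rho_star n (descend n (\<lambda>p. Pact p \<delta> 1)) = \<delta>"
    by (rule ext) (simp add: rho_star_apply descend_cls[OF respects] Pact_iota2[OF End])
qed

lemma image_rho_star_HomS:
  "rho_star n ` (HomS n :: (('a::comm_ring_1,'v::finite) P set \<Rightarrow> ('a,'v) S) set) = Dn n"
proof -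
  have "\<delta> \<in> rho_star n ` HomS n" if "\<delta> \<in> Dn n" for \<delta> :: "('a,'v) S \<Rightarrow> ('a,'v) S"
    using rho_star_descend_Pact[OF that] by (intro image_eqI[where x = "descend n (\<lambda>p. Pact p \<delta> 1)"]) simp_all
  then show ?thesis
    using rho_star_in_Dn by (intro equalityI subsetI) auto
qed

lemma bij_betw_rho_star: "bij_betw (rho_star n) (HomS n) (Dn n)"
  by (simp add: bij_betw_def inj_on_rho_star image_rho_star_HomS)

section \<open>The isomorphism gamma_n\<close>

lemma top_in_idx: "(\<lambda>_. n) \<in> idx n"
  and compl_in_idx: "(\<lambda>i. n - a i) \<in> idx n"
  by (simp_all add: idx_def)

lemma add_eq_top_iff:
  assumes "a \<in> idx n"
  shows "(\<lambda>i. a i + c i) = (\<lambda>_. n) \<longleftrightarrow> c = (\<lambda>i. n - a i)"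
proof -
  have "a i + c i = n \<longleftrightarrow> c i = n - a i" for i
  proof -
    have "a i \<le> n"
      using assms by (simp add: idx_def)
    then show ?thesis
      by arith
  qed
  then show ?thesis
    by (simp add: fun_eq_iff)
qed

lemma add_compl_eq_top_iff:
  assumes "a \<in> idx n"
  shows "(\<lambda>i. b i + (n - a i)) = (\<lambda>_. n) \<longleftrightarrow> b = a"
proof -
  have "b i + (n - a i) = n \<longleftrightarrow> b i = a i" for i
  proof -
    have "a i \<le> n"
      using assms by (simp add: idx_def)
    then show ?thesis
      by arith
  qed
  then show ?thesis
    by (simp add: fun_eq_iff)
qed

definition top_pairing :: "nat \<Rightarrow> ('a::comm_ring_1,'v::finite) P set \<Rightarrow> ('a,'v) P set \<Rightarrow> ('a,'v) S" where
  "top_pairing n \<xi> \<zeta> = (if \<xi> \<in> PQ n \<and> \<zeta> \<in> PQ n then coord (\<lambda>_. n) (rep n \<xi> * rep n \<zeta>) else 0)"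

lemma coord_top_mult_cong:
  assumes "p - p' \<in> Delta n" "q - q' \<in> Delta n"
  shows "coord (\<lambda>_. n) (p * q) = coord (\<lambda>_. n) (p' * q')"
proof -
  have "p * q - p' * q' = q * (p - p') + p' * (q - q')"
    by (simp add: algebra_simps)
  then have "p * q - p' * q' \<in> Delta n"
    using assms by (simp add: Delta_add Delta_mult)
  then show ?thesis
    using respects_Delta_coord[OF top_in_idx] unfolding respects_Delta_def by blast
qed

lemma top_pairing_cls: "top_pairing n (cls n p) (cls n q) = coord (\<lambda>_. n) (p * q)"
  by (simp add: top_pairing_def coord_top_mult_cong rep_cls_diff)

lemma top_pairing_in_HomS:
  assumes "\<xi> \<in> PQ n"
  shows "top_pairing n \<xi> \<in> HomS n"
proof -
  obtain p where p: "\<xi> = cls n p"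
    using assms by (rule PQE)
  have mult_iota1: "p * (iota1 s * q) = iota1 s * (p * q)" for s q
    by (simp add: mult_ac)
  have "slinear n (top_pairing n \<xi>)"
    by (simp add: slinear_iff_cls p top_pairing_cls distrib_left coord_add mult_iota1 coord_iota1_mult)
  then show ?thesis
    by (simp add: HomS_iff top_pairing_def)
qed

lemma slinear_top_pairing_left: "slinear n (\<lambda>\<xi>. top_pairing n \<xi> \<zeta>)"
proof (cases "\<zeta> \<in> PQ n")
  case True
  then obtain r where "\<zeta> = cls n r"
    by (rule PQE)
  then show ?thesis
    by (simp add: slinear_iff_cls top_pairing_cls distrib_right coord_add coord_iota1_mult mult.assoc)
next
  case False
  then show ?thesis
    by (simp add: slinear_def top_pairing_def)
qed

lemma top_pairing_qadd:
  assumes "\<xi> \<in> PQ n" "\<eta> \<in> PQ n"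
  shows "top_pairing n (qadd \<xi> \<eta>) = (\<lambda>\<zeta>. top_pairing n \<xi> \<zeta> + top_pairing n \<eta> \<zeta>)"
proof
  fix \<zeta>
  show "top_pairing n (qadd \<xi> \<eta>) \<zeta> = top_pairing n \<xi> \<zeta> + top_pairing n \<eta> \<zeta>"
    using slinear_top_pairing_left[of n \<zeta>] assms unfolding slinear_def by blast
qed

lemma top_pairing_qsmult:
  assumes "\<xi> \<in> PQ n"
  shows "top_pairing n (qsmult n s \<xi>) = (\<lambda>\<zeta>. s * top_pairing n \<xi> \<zeta>)"
proof
  fix \<zeta>
  show "top_pairing n (qsmult n s \<xi>) \<zeta> = s * top_pairing n \<xi> \<zeta>"
    using slinear_top_pairing_left[of n \<zeta>] assms unfolding slinear_def by blast
qed

lemma top_pairing_bas_bas: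
  "top_pairing n (bas n a) (bas n c) = (if (\<lambda>i. a i + c i) = (\<lambda>_. n) then 1 else 0)"
proof (cases "(\<lambda>i. a i + c i) \<in> idx n")
  case True
  then show ?thesis
    by (auto simp: bas_eq_cls_ydiff_pow top_pairing_cls ydiff_pow_mult coord_ydiff_pow)
next
  case False
  then have "(\<lambda>i. a i + c i) \<noteq> (\<lambda>_. n)"
    using top_in_idx[of n] by force
  moreover have "coord (\<lambda>_. n) (ydiff_pow (\<lambda>i. a i + c i)) = 0"
    using False by (intro coord_Delta_eq_0 ydiff_pow_in_Delta) (simp_all add: idx_def)
  ultimately show ?thesis
    by (simp add: bas_eq_cls_ydiff_pow top_pairing_cls ydiff_pow_mult)
qed

lemma top_pairing_bas:
  assumes "a \<in> idx n"
  shows "top_pairing n (bas n a) = dual n (\<lambda>i. n - a i)"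
proof -
  have "top_pairing n (bas n a) = descend n (coord (\<lambda>i. n - a i))"
  proof (rule HomS_eqI)
    show "top_pairing n (bas n a) \<in> HomS n"
      by (simp add: bas_eq_cls_ydiff_pow top_pairing_in_HomS)
    show "descend n (coord (\<lambda>i. n - a i)) \<in> HomS n"
      by (rule descend_coord_in_HomS[OF compl_in_idx])
    show "top_pairing n (bas n a) (bas n c) = descend n (coord (\<lambda>i. n - a i)) (bas n c)" if "c \<in> idx n" for c
      using assms that by (simp add: top_pairing_bas_bas descend_coord_bas compl_in_idx add_eq_top_iff)
  qed
  then show ?thesis
    by (simp add: dual_eq_descend_coord compl_in_idx)
qed

lemma top_pairing_cls_bas_compl:
  assumes "a \<in> idx n"
  shows "top_pairing n (cls n p) (bas n (\<lambda>i. n - a i)) = coord a p"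
proof -
  have "top_pairing n (cls n p) (bas n (\<lambda>i. n - a i)) =
      (\<Sum>b\<in>idx n. coord b p * top_pairing n (bas n b) (bas n (\<lambda>i. n - a i)))"
    by (rule slinear_cls_expansion[OF slinear_top_pairing_left])
  also have "\<dots> = (\<Sum>b\<in>idx n. if b = a then coord b p else 0)"
    using assms by (intro sum.cong) (simp_all add: top_pairing_bas_bas add_compl_eq_top_iff)
  also have "\<dots> = coord a p"
    using assms by (simp add: finite_idx)
  finally show ?thesis .
qed

lemma top_pairing_outside: "\<xi> \<notin> PQ n \<Longrightarrow> top_pairing n \<xi> = (\<lambda>_. 0)"
  by (simp add: top_pairing_def fun_eq_iff)

lemma eq_top_pairingI:
  assumes g_slinear: "\<And>\<zeta>. slinear n (\<lambda>\<xi>. g \<xi> \<zeta>)"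
    and g_bas: "\<And>a. a \<in> idx n \<Longrightarrow> g (bas n a) = dual n (\<lambda>i. n - a i)"
    and g_outside: "\<And>\<xi>. \<xi> \<notin> PQ n \<Longrightarrow> g \<xi> = (\<lambda>_. 0)"
  shows "g = top_pairing n"
proof (intro ext)
  fix \<xi> \<zeta>
  show "g \<xi> \<zeta> = top_pairing n \<xi> \<zeta>"
  proof (cases "\<xi> \<in> PQ n")
    case True
    have "g (bas n a) \<zeta> = top_pairing n (bas n a) \<zeta>" if "a \<in> idx n" for a
      using g_bas[OF that] by (simp add: top_pairing_bas[OF that])
    then show ?thesis
      by (rule slinear_eq_on_PQ[OF g_slinear slinear_top_pairing_left _ True])
  next
    case False
    then show ?thesis
      by (simp add: g_outside top_pairing_outside)
  qed
qed

lemma gamma_eq_top_pairing: "gamma n = top_pairing n"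
  unfolding gamma_def
proof (rule the_equality, goal_cases)
  case 1
  show ?case
    by (simp add: top_pairing_in_HomS top_pairing_qadd top_pairing_qsmult top_pairing_bas top_pairing_outside)
next
  case (2 g)
  then have "slinear n (\<lambda>\<xi>. g \<xi> \<zeta>)" for \<zeta>
    by (simp add: slinear_def)
  moreover have "g (bas n a) = dual n (\<lambda>i. n - a i)" if "a \<in> idx n" for a
    using 2 that by blast
  moreover have "g \<xi> = (\<lambda>_. 0)" if "\<xi> \<notin> PQ n" for \<xi>
    using 2 that by blast
  ultimately show ?case
    by (rule eq_top_pairingI)
qed

lemma inj_on_top_pairing: "inj_on (top_pairing n) (PQ n)"
proof (rule inj_onI)
  fix \<xi> \<eta>
  assume "\<xi> \<in> PQ n" "\<eta> \<in> PQ n" and eq: "top_pairing n \<xi> = top_pairing n \<eta>"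
  obtain p where p: "\<xi> = cls n p"
    using \<open>\<xi> \<in> PQ n\<close> by (rule PQE)
  obtain q where q: "\<eta> = cls n q"
    using \<open>\<eta> \<in> PQ n\<close> by (rule PQE)
  have "coord a p = coord a q" if "a \<in> idx n" for a
    using eq top_pairing_cls_bas_compl[OF that, of p] top_pairing_cls_bas_compl[OF that, of q] by (simp add: p q)
  then have "(\<Sum>a\<in>idx n. iota1 (coord a p) * ydiff_pow a) = (\<Sum>a\<in>idx n. iota1 (coord a q) * ydiff_pow a)"
    by (intro sum.cong) simp_all
  then show "\<xi> = \<eta>"
    using p q cls_eq_cls_expansion[of n p] cls_eq_cls_expansion[of n q] by simp
qed

lemma HomS_eq_top_pairing:
  fixes \<phi> :: "('a::comm_ring_1,'v::finite) P set \<Rightarrow> ('a,'v) S"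
  assumes "\<phi> \<in> HomS n"
  shows "\<phi> = top_pairing n (cls n (\<Sum>a\<in>idx n. iota1 (\<phi> (bas n (\<lambda>i. n - a i))) * ydiff_pow a))"
    (is "_ = top_pairing n (cls n ?p)")
proof (rule HomS_eqI[OF assms top_pairing_in_HomS[OF cls_in_PQ]])
  fix c :: "'v \<Rightarrow> nat"
  assume c: "c \<in> idx n"
  then have compl_compl: "(\<lambda>i. n - (n - c i)) = c"
    by (auto simp: idx_def fun_eq_iff)
  have "top_pairing n (cls n ?p) (bas n c) = coord (\<lambda>i. n - c i) ?p"
    using top_pairing_cls_bas_compl[OF compl_in_idx[of n c], of ?p] by (simp only: compl_compl)
  also have "\<dots> = \<phi> (bas n c)"
    by (simp add: coord_sum_iota1_mult_ydiff_pow compl_in_idx compl_compl)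
  finally show "\<phi> (bas n c) = top_pairing n (cls n ?p) (bas n c)" ..
qed

lemma image_top_pairing_PQ:
  "top_pairing n ` PQ n = (HomS n :: (('a::comm_ring_1,'v::finite) P set \<Rightarrow> ('a,'v) S) set)"
proof -
  have "\<phi> \<in> top_pairing n ` PQ n" if "\<phi> \<in> HomS n" for \<phi> :: "('a,'v) P set \<Rightarrow> ('a,'v) S"
    using HomS_eq_top_pairing[OF that] by (rule image_eqI) simp
  then show ?thesis
    using top_pairing_in_HomS by (intro equalityI subsetI) auto
qed

lemma bij_betw_top_pairing: "bij_betw (top_pairing n) (PQ n) (HomS n)"
  by (simp add: bij_betw_def inj_on_top_pairing image_top_pairing_PQ)

lemma top_pairing_qact:
  assumes "\<xi> \<in> PQ n"
  shows "top_pairing n (qact n p \<xi>) = Hact n p (top_pairing n \<xi>)"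
proof
  obtain q where q: "\<xi> = cls n q"
    using assms by (rule PQE)
  fix \<zeta>
  show "top_pairing n (qact n p \<xi>) \<zeta> = Hact n p (top_pairing n \<xi>) \<zeta>"
  proof (cases "\<zeta> \<in> PQ n")
    case True
    then obtain r where "\<zeta> = cls n r"
      by (rule PQE)
    then show ?thesis
      by (simp add: q qact_cls Hact_cls top_pairing_cls mult_ac)
  next
    case False
    then show ?thesis
      by (simp add: Hact_def top_pairing_def)
  qed
qed

lemma koszul_top_eq_PQ: "koszul_top (\<lambda>i. (PY i - PX i) ^ Suc n) = PQ n"
  unfolding koszul_top_def PQ_def cls_def Delta_def by (simp add: mult.commute)

theorem proposition3p1:
  fixes n :: nat
  defines "H \<equiv> koszul_top (\<lambda>i::'v::finite. (PY i - PX i :: ('a::comm_ring_1,'v) P) ^ Suc n)"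
  shows "H = PQ n
    \<and> bij_betw (gamma n) H (HomS n)
    \<and> (\<forall>\<xi>\<in>H. \<forall>\<eta>\<in>H. gamma n (qadd \<xi> \<eta>) = (\<lambda>\<zeta>. gamma n \<xi> \<zeta> + gamma n \<eta> \<zeta>))
    \<and> (\<forall>p. \<forall>\<xi>\<in>H. gamma n (qact n p \<xi>) = Hact n p (gamma n \<xi>))
    \<and> bij_betw (rho_star n) (HomS n :: (('a,'v) P set \<Rightarrow> ('a,'v) S) set) (Dn n)
    \<and> (\<forall>\<phi>\<in>(HomS n :: (('a,'v) P set \<Rightarrow> ('a,'v) S) set). \<forall>\<psi>\<in>HomS n. rho_star n (\<lambda>\<zeta>. \<phi> \<zeta> + \<psi> \<zeta>) = (\<lambda>f. rho_star n \<phi> f + rho_star n \<psi> f))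
    \<and> (\<forall>p. \<forall>\<phi>\<in>(HomS n :: (('a,'v) P set \<Rightarrow> ('a,'v) S) set). rho_star n (Hact n p \<phi>) = Pact p (rho_star n \<phi>))"
proof -
  have H: "H = PQ n"
    unfolding H_def by (rule koszul_top_eq_PQ)
  show ?thesis
    unfolding H gamma_eq_top_pairing
    by (simp add: bij_betw_top_pairing top_pairing_qadd top_pairing_qact bij_betw_rho_star rho_star_Hact rho_star_add)
qed

end
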